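(* For every $\epsilon>0$ there exists $n_0\in\mathbb N$ such that the following holds for all $n>n_0$. Let $0<\alpha<1$ and suppose $\sigma\in S_n$ has no fixed points and has at most $n^{\alpha}$ cycles of length at most $\lceil 2/\epsilon\rceil$. Then $E(\sigma)\le\alpha/2+\epsilon/2$.
   Context: For $\sigma\in S_n$ let $f_\sigma(i)$ be the number of $i$-cycles of $\sigma$ (fixed points are $1$-cycles). Define $e_1,\dots,e_n$ by $e_1+\cdots+e_k=\max\left(\frac{\log\left(\sum_{i=1}^k i f_\sigma(i)\right)}{\log n},0\right)$ for $1\le k\le n$ (with $\log 0=-\infty$), and set $E(\sigma)=\sum_{i=1}^n e_i/i$. *)

theory Defs
  imports Complex_Main "HOL-Combinatorics.Combinatorics"
begin

text \<open>Permutations in S_n are functions sigma with sigma permutes {1..n}.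
  The cycles of sigma are its orbits on {1..n}; an i-cycle is an orbit of size i.\<close>

definition cycles_of :: "nat \<Rightarrow> (nat \<Rightarrow> nat) \<Rightarrow> nat set set" where
  "cycles_of n \<sigma> = (\<lambda>x. orbit \<sigma> x) ` {1..n}"

definition fcyc :: "nat \<Rightarrow> (nat \<Rightarrow> nat) \<Rightarrow> nat \<Rightarrow> nat" where
  "fcyc n \<sigma> i = card {C \<in> cycles_of n \<sigma>. card C = i}"

text \<open>Partial sums e_1 + ... + e_k = max(log(sum_{i<=k} i f(i)) / log n, 0), with log 0 = -infinity
  (so the value is 0 when the inner sum is 0). For k = 0 the sum is empty, giving 0.\<close>
definition Epart :: "nat \<Rightarrow> (nat \<Rightarrow> nat) \<Rightarrow> nat \<Rightarrow> real" where
  "Epart n \<sigma> k = (let s = (\<Sum>i=1..k. i * fcyc n \<sigma> i) in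
      if s = 0 then 0 else max (ln (real s) / ln (real n)) 0)"

definition ecoef :: "nat \<Rightarrow> (nat \<Rightarrow> nat) \<Rightarrow> nat \<Rightarrow> real" where
  "ecoef n \<sigma> k = Epart n \<sigma> k - Epart n \<sigma> (k - 1)"

definition Eval :: "nat \<Rightarrow> (nat \<Rightarrow> nat) \<Rightarrow> real" where
  "Eval n \<sigma> = (\<Sum>i=1..n. ecoef n \<sigma> i / real i)"

end

theory Submission
  imports Defs
begin

text \<open>Write \<open>E k = e\<^sub>1 + \<dots> + e\<^sub>k\<close>. Then \<open>E\<close> is monotone, \<open>E 1 = 0\<close> because there are no
  fixed points, and \<open>E n \<le> 1\<close>. Summation by parts splits \<open>E(\<sigma>)\<close> at \<open>K = \<lceil>2/\<epsilon>\<rceil>\<close>: the increments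
  up to \<open>K\<close> carry weight at most \<open>1/2\<close> and contribute at most \<open>E K / 2\<close>, the remaining ones carry
  weight at most \<open>1/(K+1) < \<epsilon>/2\<close> and sum to at most \<open>1\<close>. Finally at most \<open>K n\<^sup>\<alpha>\<close> points lie in
  cycles of length at most \<open>K\<close>, so \<open>E K \<le> \<alpha> + ln K / ln n\<close>, and the error term vanishes as
  \<open>n \<rightarrow> \<infinity>\<close>.\<close>

definition short_cycle_mass :: "nat \<Rightarrow> (nat \<Rightarrow> nat) \<Rightarrow> nat \<Rightarrow> nat" where
  "short_cycle_mass n \<sigma> k = (\<Sum>i=1..k. i * fcyc n \<sigma> i)"

lemma short_cycle_mass_mono: "k \<le> k' \<Longrightarrow> short_cycle_mass n \<sigma> k \<le> short_cycle_mass n \<sigma> k'"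
  unfolding short_cycle_mass_def by (rule sum_mono2) auto

lemma short_cycle_mass_le_mult:
  "short_cycle_mass n \<sigma> k \<le> k * (\<Sum>i=1..k. fcyc n \<sigma> i)"
proof -
  have "short_cycle_mass n \<sigma> k \<le> (\<Sum>i=1..k. k * fcyc n \<sigma> i)"
    unfolding short_cycle_mass_def by (intro sum_mono) auto
  then show ?thesis by (simp add: sum_distrib_left)
qed

lemma cycles_of_subset:
  assumes "\<sigma> permutes {1..n}" "C \<in> cycles_of n \<sigma>"
  shows "C \<subseteq> {1..n}"
proof -
  obtain x where "x \<in> {1..n}" "C = orbit \<sigma> x"
    using assms(2) unfolding cycles_of_def by blast
  then show ?thesis
    using permutes_orbit_subset[OF assms(1)] by simp
qed

lemma cycles_of_disjoint:
  assumes "\<sigma> permutes {1..n}"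
  shows "disjoint (cycles_of n \<sigma>)"
proof (rule disjointI)
  have orbit_eq: "orbit \<sigma> z = orbit \<sigma> x" if "z \<in> orbit \<sigma> x" for x z
    using assms that by (intro orbit_cyclic_eq3 cyclic_on_orbit) auto
  fix C D assume "C \<in> cycles_of n \<sigma>" "D \<in> cycles_of n \<sigma>" "C \<noteq> D"
  then obtain x y where C: "C = orbit \<sigma> x" and D: "D = orbit \<sigma> y"
    unfolding cycles_of_def by blast
  show "C \<inter> D = {}"
  proof (rule ccontr)
    assume "C \<inter> D \<noteq> {}"
    then obtain z where "z \<in> orbit \<sigma> x" "z \<in> orbit \<sigma> y"
      unfolding C D by blast
    then have "C = D"
      unfolding C D using orbit_eq by metis
    with \<open>C \<noteq> D\<close> show False ..
  qed
qed

lemma short_cycle_mass_le: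
  assumes "\<sigma> permutes {1..n}"
  shows "short_cycle_mass n \<sigma> k \<le> n"
proof -
  define T where "T = {C \<in> cycles_of n \<sigma>. card C \<in> {1..k}}"
  have "finite T"
    unfolding T_def cycles_of_def by simp
  have T_sub: "C \<subseteq> {1..n}" if "C \<in> T" for C
    using that cycles_of_subset[OF assms] unfolding T_def by blast
  have "short_cycle_mass n \<sigma> k = (\<Sum>i=1..k. \<Sum>C\<in>{C \<in> T. card C = i}. card C)"
  proof (unfold short_cycle_mass_def fcyc_def, intro sum.cong refl)
    fix i assume "i \<in> {1..k}"
    then have "{C \<in> T. card C = i} = {C \<in> cycles_of n \<sigma>. card C = i}"
      unfolding T_def by auto
    then show "i * card {C \<in> cycles_of n \<sigma>. card C = i} = (\<Sum>C\<in>{C \<in> T. card C = i}. card C)"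
      by simp
  qed
  also have "\<dots> = (\<Sum>C\<in>T. card C)"
    using \<open>finite T\<close> by (intro sum.group) (auto simp: T_def)
  also have "\<dots> = card (\<Union>T)"
  proof (rule card_Union_disjoint[symmetric])
    show "pairwise disjnt T"
      using cycles_of_disjoint[OF assms] unfolding T_def pairwise_def by blast
  qed (use T_sub finite_subset in blast)
  also have "\<dots> \<le> card {1..n}"
    using T_sub by (intro card_mono) auto
  finally show ?thesis by simp
qed

lemma fcyc_1_eq_0:
  assumes "\<sigma> permutes {1..n}" "\<forall>x\<in>{1..n}. \<sigma> x \<noteq> x"
  shows "fcyc n \<sigma> 1 = 0"
proof -
  have "card (orbit \<sigma> x) \<noteq> 1" if "x \<in> {1..n}" for x
  proof -
    have cyc: "cyclic_on \<sigma> (orbit \<sigma> x)"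
      using assms(1) by (intro cyclic_on_orbit) auto
    have "x \<in> orbit \<sigma> x"
      using assms(1) by (intro permutation_self_in_orbit permutation_permutes[THEN iffD2]) auto
    with cyc show ?thesis
      using assms(2) that by (elim eq_on_cyclic_on_iff1) auto
  qed
  then show ?thesis
    unfolding fcyc_def cycles_of_def by auto
qed

lemma Epart_eq:
  "Epart n \<sigma> k = (if short_cycle_mass n \<sigma> k = 0 then 0
     else max (ln (real (short_cycle_mass n \<sigma> k)) / ln (real n)) 0)"
  unfolding Epart_def short_cycle_mass_def Let_def by simp

lemma Epart_0 [simp]: "Epart n \<sigma> 0 = 0"
  by (simp add: Epart_def)

lemma mono_Epart:
  assumes "n \<ge> 2"
  shows "mono (Epart n \<sigma>)"
proof (rule monoI)
  fix k k' :: nat assume "k \<le> k'"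
  then have le: "short_cycle_mass n \<sigma> k \<le> short_cycle_mass n \<sigma> k'"
    by (rule short_cycle_mass_mono)
  have "ln (real n) > 0" using assms by simp
  with le show "Epart n \<sigma> k \<le> Epart n \<sigma> k'"
    by (auto simp: Epart_eq intro!: divide_right_mono max.mono)
qed

lemma Epart_le:
  assumes "n \<ge> 2" "real (short_cycle_mass n \<sigma> k) \<le> x" "x \<ge> 1"
  shows "Epart n \<sigma> k \<le> ln x / ln (real n)"
proof -
  have "ln (real n) > 0" "ln x \<ge> 0"
    using assms by auto
  then have "ln x / ln (real n) \<ge> 0"
    by simp
  moreover have "ln (real (short_cycle_mass n \<sigma> k)) / ln (real n) \<le> ln x / ln (real n)"
    if "short_cycle_mass n \<sigma> k \<noteq> 0"
    using assms(2) that \<open>ln (real n) > 0\<close> by (intro divide_right_mono) auto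
  ultimately show ?thesis
    by (simp add: Epart_eq)
qed

lemma Epart_le_1:
  assumes "\<sigma> permutes {1..n}" "n \<ge> 2"
  shows "Epart n \<sigma> k \<le> 1"
  using Epart_le[of n \<sigma> k "real n"] short_cycle_mass_le[OF assms(1)] assms(2) by simp

lemma Eval_eq: "Eval n \<sigma> = (\<Sum>i=1..n. (Epart n \<sigma> i - Epart n \<sigma> (i - 1)) / real i)"
  unfolding Eval_def ecoef_def ..

lemma weighted_increments_le:
  fixes E :: "nat \<Rightarrow> real"
  assumes "mono E" "E 0 = 0" "E 1 = 0" "E n \<le> 1" "K \<le> n"
  shows "(\<Sum>i=1..n. (E i - E (i - 1)) / real i) \<le> E K / 2 + 1 / (real K + 1)"
proof -
  define e where "e i = E i - E (i - 1)" for i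
  have e_nonneg: "e i \<ge> 0" for i
    unfolding e_def using \<open>mono E\<close> by (simp add: monoD)
  have "E K \<ge> 0"
    using \<open>mono E\<close> \<open>E 0 = 0\<close> by (metis le0 monoD)
  have low: "(\<Sum>i=1..K. e i / real i) \<le> (\<Sum>i=1..K. e i / 2)"
  proof (rule sum_mono)
    fix i assume i: "i \<in> {1..K}"
    show "e i / real i \<le> e i / 2"
    proof (cases "i = 1")
      case True then show ?thesis using assms(2,3) by (simp add: e_def)
    next
      case False then show ?thesis using i e_nonneg[of i] by (intro divide_left_mono) auto
    qed
  qed
  have high: "(\<Sum>i=Suc K..n. e i / real i) \<le> (\<Sum>i=Suc K..n. e i / (real K + 1))"
    using e_nonneg by (intro sum_mono divide_left_mono) auto
  have "(\<Sum>i=1..n. e i / real i) = (\<Sum>i=1..K. e i / real i) + (\<Sum>i=Suc K..n. e i / real i)"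
    using sum.ub_add_nat[of 1 K "\<lambda>i. e i / real i" "n - K"] \<open>K \<le> n\<close> by simp
  also have "\<dots> \<le> (\<Sum>i=1..K. e i) / 2 + (\<Sum>i=Suc K..n. e i) / (real K + 1)"
    using low high by (simp add: sum_divide_distrib)
  also have "\<dots> = E K / 2 + (E n - E K) / (real K + 1)"
    using sum_telescope''[of 0 K E] sum_telescope''[of K n E] \<open>K \<le> n\<close> \<open>E 0 = 0\<close>
    by (simp add: e_def)
  also have "\<dots> \<le> E K / 2 + 1 / (real K + 1)"
    using \<open>E n \<le> 1\<close> \<open>E K \<ge> 0\<close> by (intro add_left_mono divide_right_mono) auto
  finally show ?thesis
    unfolding e_def .
qed

lemma Eval_le:
  assumes "\<sigma> permutes {1..n}" "\<forall>x\<in>{1..n}. \<sigma> x \<noteq> x" "n \<ge> 2" "K \<le> n"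
  shows "Eval n \<sigma> \<le> Epart n \<sigma> K / 2 + 1 / (real K + 1)"
proof -
  have "Epart n \<sigma> 1 = 0"
    using fcyc_1_eq_0[OF assms(1,2)] by (simp add: Epart_def)
  then show ?thesis
    unfolding Eval_eq using assms by (intro weighted_increments_le mono_Epart Epart_le_1) auto
qed

lemma Epart_le_of_few_short_cycles:
  assumes "n \<ge> 2" "K \<ge> 1" "\<alpha> \<ge> 0" "real (\<Sum>i=1..K. fcyc n \<sigma> i) \<le> real n powr \<alpha>"
  shows "Epart n \<sigma> K \<le> \<alpha> + ln (real K) / ln (real n)"
proof -
  have "real (short_cycle_mass n \<sigma> K) \<le> real K * real (\<Sum>i=1..K. fcyc n \<sigma> i)"
    using short_cycle_mass_le_mult[of n \<sigma> K] by (metis of_nat_le_iff of_nat_mult)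
  also have "\<dots> \<le> real K * real n powr \<alpha>"
    using assms(4) by (simp add: mult_left_mono)
  moreover have "1 \<le> real K * real n powr \<alpha>"
  proof -
    have "1 \<le> real n powr \<alpha>"
      using assms(1,3) by (intro ge_one_powr_ge_zero) auto
    also have "\<dots> \<le> real K * real n powr \<alpha>"
      using assms(2) mult_right_mono[of 1 "real K" "real n powr \<alpha>"] by simp
    finally show ?thesis .
  qed
  ultimately have "Epart n \<sigma> K \<le> ln (real K * real n powr \<alpha>) / ln (real n)"
    using assms(1) by (intro Epart_le) auto
  also have "\<dots> = \<alpha> + ln (real K) / ln (real n)"
    using assms(1,2) by (simp add: ln_mult field_simps)
  finally show ?thesis .
qed

lemma Eval_le_of_few_short_cycles:
  assumes "\<sigma> permutes {1..n}" "\<forall>x\<in>{1..n}. \<sigma> x \<noteq> x" "1 \<le> K" "K < n" "\<alpha> \<ge> 0"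
    and "real (\<Sum>i=1..K. fcyc n \<sigma> i) \<le> real n powr \<alpha>"
  shows "Eval n \<sigma> \<le> (\<alpha> + ln (real K) / ln (real n)) / 2 + 1 / (real K + 1)"
proof -
  have "n \<ge> 2"
    using assms(3,4) by linarith
  have "Eval n \<sigma> \<le> Epart n \<sigma> K / 2 + 1 / (real K + 1)"
    using assms(1,2,4) \<open>n \<ge> 2\<close> by (intro Eval_le) simp_all
  also have "\<dots> \<le> (\<alpha> + ln (real K) / ln (real n)) / 2 + 1 / (real K + 1)"
    using Epart_le_of_few_short_cycles[OF \<open>n \<ge> 2\<close> assms(3,5,6)] by simp
  finally show ?thesis .
qed

lemma eventually_ln_div_ln_less:
  assumes "c > 0"
  shows "eventually (\<lambda>n. ln x / ln (real n) < c) sequentially"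
proof -
  have "filterlim (\<lambda>n. ln (real n)) at_infinity sequentially"
    by (intro filterlim_at_top_imp_at_infinity filterlim_compose[OF ln_at_top]
        filterlim_real_sequentially)
  then have "((\<lambda>n. ln x / ln (real n)) \<longlongrightarrow> 0) sequentially"
    by (intro tendsto_divide_0[OF tendsto_const])
  then show ?thesis
    using assms by (rule order_tendstoD(2))
qed

theorem lemma2p7:
  fixes \<epsilon> :: real
  assumes "\<epsilon> > 0"
  shows "\<exists>n0::nat. \<forall>n > n0. \<forall>(\<alpha>::real) (\<sigma>::nat \<Rightarrow> nat).
           0 < \<alpha> \<and> \<alpha> < 1 \<and> \<sigma> permutes {1..n} \<and> (\<forall>x\<in>{1..n}. \<sigma> x \<noteq> x) \<and>
           real (\<Sum>i=1..nat \<lceil>2 / \<epsilon>\<rceil>. fcyc n \<sigma> i) \<le> real n powr \<alpha>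
           \<longrightarrow> Eval n \<sigma> \<le> \<alpha> / 2 + \<epsilon> / 2"
proof -
  define K where "K = nat \<lceil>2 / \<epsilon>\<rceil>"
  have "real K \<ge> 2 / \<epsilon>"
    unfolding K_def by linarith
  moreover have "2 / \<epsilon> > 0"
    using \<open>\<epsilon> > 0\<close> by simp
  ultimately have "K \<ge> 1"
    by linarith
  have "2 / (real K + 1) < \<epsilon>"
    using \<open>real K \<ge> 2 / \<epsilon>\<close> \<open>\<epsilon> > 0\<close> by (simp add: field_simps)
  have halves: "(\<alpha> + (\<epsilon> - 2 / x)) / 2 + 1 / x = \<alpha> / 2 + \<epsilon> / 2" for \<alpha> x :: real
    by (simp add: add_divide_distrib diff_divide_distrib)
  have "eventually (\<lambda>n. ln (real K) / ln (real n) < \<epsilon> - 2 / (real K + 1) \<and> K < n) sequentially"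
    using \<open>2 / (real K + 1) < \<epsilon>\<close>
    by (intro eventually_conj eventually_ln_div_ln_less eventually_gt_at_top) simp
  then obtain n0 where n0: "\<And>n. n \<ge> n0 \<Longrightarrow> ln (real K) / ln (real n) < \<epsilon> - 2 / (real K + 1) \<and> K < n"
    unfolding eventually_sequentially by blast
  show ?thesis unfolding K_def[symmetric]
  proof (intro exI[of _ n0] allI impI, elim conjE)
    fix n \<alpha> \<sigma>
    assume "n > n0" "0 < \<alpha>" "\<sigma> permutes {1..n}" "\<forall>x\<in>{1..n}. \<sigma> x \<noteq> x"
      "real (\<Sum>i=1..K. fcyc n \<sigma> i) \<le> real n powr \<alpha>"
    with n0[of n] \<open>K \<ge> 1\<close> have "Eval n \<sigma> \<le> (\<alpha> + ln (real K) / ln (real n)) / 2 + 1 / (real K + 1)"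
      by (intro Eval_le_of_few_short_cycles) auto
    also have "\<dots> \<le> (\<alpha> + (\<epsilon> - 2 / (real K + 1))) / 2 + 1 / (real K + 1)"
      using n0[of n] \<open>n > n0\<close> by (intro add_right_mono divide_right_mono add_left_mono) auto
    also have "\<dots> = \<alpha> / 2 + \<epsilon> / 2"
      by (rule halves)
    finally show "Eval n \<sigma> \<le> \<alpha> / 2 + \<epsilon> / 2" .
  qed
qed

end
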